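(* Take $g_k(x)=|x|$ for all $k$, and assume (H1) and (H2) for $(X_1,\ldots,X_d)$ and for the aggregated vector below. Let $CR\subseteq\{1,\ldots,d\}$ be a set of $r\le d$ indices such that the risks $(X_k)_{k\in CR}$ are comonotonic. Let $(u_1,\ldots,u_d)=A_{X_1,\ldots,X_d}(u)$. Then the optimal allocation of $u$ for the vector consisting of the risks $X_i$, $i\in\{1,\ldots,d\}\setminus CR$, together with the single aggregated risk $\sum_{k\in CR}X_k$, is $A_{(X_i)_{i\notin CR},\,\sum_{k\in CR}X_k}(u)=\big((u_i)_{i\notin CR},\ \sum_{k\in CR}u_k\big)$.
   Context: For a vector $\mathbf Y=(Y_1,\ldots,Y_m)$ of nonnegative random variables and capital $u\ge0$, $\mathcal{U}^m_u=\{v\in[0,u]^m:\sum_k v_k=u\}$ and $I_{\mathbf Y}(v)=\sum_{k=1}^m\mathbb{E}[g_k(v_k-Y_k)\mathbf 1_{\{Y_k>v_k\}}\mathbf 1_{\{\sum_l Y_l\le u\}}]$; with $g_k(x)=|x|$ this is $\sum_k\mathbb{E}[(Y_k-v_k)^+\mathbf 1_{\{\sum_l Y_l\le u\}}]$. (H1): $I_{\mathbf Y}$ has a unique minimizer on $\mathcal{U}^m_u$, denoted $A_{Y_1,\ldots,Y_m}(u)$ (the optimal allocation). (H2): the $g_k$ are differentiable, the relevant $g_k'(v_k-Y_k)$ are integrable, and each pair $(Y_k,\sum_l Y_l)$ has a joint density. Random variables $(Z_1,\ldots,Z_n)$ are comonotonic if there exist a random variable $W$ and non-decreasing functions $\varphi_1,\ldots,\varphi_n$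 with $(Z_1,\ldots,Z_n)\overset{d}{=}(\varphi_1(W),\ldots,\varphi_n(W))$. *)

theory Defs
  imports "HOL-Probability.Probability"
begin

definition alloc_set :: "'i set \<Rightarrow> real \<Rightarrow> ('i \<Rightarrow> real) set" where
  "alloc_set I u = {v. (\<forall>k\<in>I. 0 \<le> v k \<and> v k \<le> u) \<and> (\<forall>k. k \<notin> I \<longrightarrow> v k = 0)
                        \<and> (\<Sum>k\<in>I. v k) = u}"

definition risk_ind ::
  "('i \<Rightarrow> real \<Rightarrow> real) \<Rightarrow> 'a measure \<Rightarrow> ('i \<Rightarrow> 'a \<Rightarrow> real) \<Rightarrow> 'i set \<Rightarrow> real
   \<Rightarrow> ('i \<Rightarrow> real) \<Rightarrow> real" where
  "risk_ind g M Y I u v =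
     (\<Sum>k\<in>I. integral\<^sup>L M (\<lambda>\<omega>. g k (v k - Y k \<omega>)
         * indicator {\<omega>. Y k \<omega> > v k} \<omega>
         * indicator {\<omega>. (\<Sum>l\<in>I. Y l \<omega>) \<le> u} \<omega>))"

definition is_minimizer ::
  "('i \<Rightarrow> real \<Rightarrow> real) \<Rightarrow> 'a measure \<Rightarrow> ('i \<Rightarrow> 'a \<Rightarrow> real) \<Rightarrow> 'i set \<Rightarrow> real
   \<Rightarrow> ('i \<Rightarrow> real) \<Rightarrow> bool" where
  "is_minimizer g M Y I u v \<longleftrightarrow>
     v \<in> alloc_set I u \<and> (\<forall>w\<in>alloc_set I u. risk_ind g M Y I u v \<le> risk_ind g M Y I u w)"

definition H1 ::
  "('i \<Rightarrow> real \<Rightarrow> real) \<Rightarrow> 'a measure \<Rightarrow> ('i \<Rightarrow> 'a \<Rightarrow> real) \<Rightarrow> 'i set \<Rightarrow> real \<Rightarrow> bool" where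
  "H1 g M Y I u \<longleftrightarrow> (\<exists>!v. is_minimizer g M Y I u v)"

definition opt_alloc ::
  "('i \<Rightarrow> real \<Rightarrow> real) \<Rightarrow> 'a measure \<Rightarrow> ('i \<Rightarrow> 'a \<Rightarrow> real) \<Rightarrow> 'i set \<Rightarrow> real \<Rightarrow> ('i \<Rightarrow> real)" where
  "opt_alloc g M Y I u = (THE v. is_minimizer g M Y I u v)"

definition has_joint_density :: "'a measure \<Rightarrow> ('a \<Rightarrow> real) \<Rightarrow> ('a \<Rightarrow> real) \<Rightarrow> bool" where
  "has_joint_density M Z1 Z2 \<longleftrightarrow>
     (\<exists>f. distributed M (lborel \<Otimes>\<^sub>M lborel) (\<lambda>\<omega>. (Z1 \<omega>, Z2 \<omega>)) f)"

text \<open>(H2) specialised to g_k = |.|: measurable risks, integrable derivatives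
  g_k'(v_k - Y_k) = sgn(v_k - Y_k), and each pair (Y_k, sum_l Y_l) has a joint density.\<close>
definition H2_abs :: "'a measure \<Rightarrow> ('i \<Rightarrow> 'a \<Rightarrow> real) \<Rightarrow> 'i set \<Rightarrow> real \<Rightarrow> bool" where
  "H2_abs M Y I u \<longleftrightarrow>
     (\<forall>k\<in>I. Y k \<in> borel_measurable M)
   \<and> (\<forall>v\<in>alloc_set I u. \<forall>k\<in>I. integrable M (\<lambda>\<omega>. sgn (v k - Y k \<omega>)))
   \<and> (\<forall>k\<in>I. has_joint_density M (Y k) (\<lambda>\<omega>. \<Sum>l\<in>I. Y l \<omega>))"

definition comonotonic :: "'a measure \<Rightarrow> ('i \<Rightarrow> 'a \<Rightarrow> real) \<Rightarrow> 'i set \<Rightarrow> bool" where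
  "comonotonic M Z C \<longleftrightarrow>
     (\<exists>W \<phi>. W \<in> borel_measurable M \<and> (\<forall>k\<in>C. mono (\<phi> k :: real \<Rightarrow> real)) \<and>
        distr M (PiM C (\<lambda>_. borel)) (\<lambda>\<omega>. \<lambda>k\<in>C. Z k \<omega>)
      = distr M (PiM C (\<lambda>_. borel)) (\<lambda>\<omega>. \<lambda>k\<in>C. \<phi> k (W \<omega>)))"

text \<open>Aggregated vector: indices Some i for i outside CR, and None for the aggregate.\<close>
definition agg_risks :: "('i \<Rightarrow> 'a \<Rightarrow> real) \<Rightarrow> 'i set \<Rightarrow> 'i option \<Rightarrow> 'a \<Rightarrow> real" where
  "agg_risks X CR j = (case j of None \<Rightarrow> (\<lambda>\<omega>. \<Sum>k\<in>CR. X k \<omega>) | Some i \<Rightarrow> X i)"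

definition agg_index :: "'i set \<Rightarrow> 'i set \<Rightarrow> 'i option set" where
  "agg_index D CR = Some ` (D - CR) \<union> {None}"

end

theory Submission
  imports Defs
begin

(* With g_k = |.| the risk indicator is a sum of convex functions
   F_k(a) = E[(Y_k - a)^+ 1{S <= u}], S the total risk, whose right and left derivatives at a are
   -P(Y_k > a, S <= u) and -P(Y_k >= a, S <= u). Hence v is optimal iff some level L satisfies
   P(Y_k > v_k, S <= u) <= L for all k and L <= P(Y_k >= v_k, S <= u) whenever v_k > 0.
   For comonotonic risks the events {X_k > v_k}, k in CR, are almost surely nested, so
   {sum X_k > sum v_k} lies almost surely inside one of them; dually {sum X_k >= sum v_k} almost
   surely contains some {X_k >= v_k} with v_k > 0. Aggregation does not change S, so the level of
   the optimal allocation of X also certifies the aggregated allocation, which is then the unique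
   optimum by (H1). *)

section \<open>Continuity of tail probabilities\<close>

lemma (in finite_measure) measure_Collect_less_shift_tendsto:
  fixes Z :: "'a \<Rightarrow> real"
  assumes [measurable]: "Z \<in> borel_measurable M" "Measurable.pred M P"
  shows "(\<lambda>n. measure M {\<omega>\<in>space M. a + inverse (Suc n) < Z \<omega> \<and> P \<omega>})
           \<longlonglongrightarrow> measure M {\<omega>\<in>space M. a < Z \<omega> \<and> P \<omega>}"
proof -
  define A where "A n = {\<omega>\<in>space M. a + inverse (Suc n) < Z \<omega> \<and> P \<omega>}" for n
  have "inverse (Suc n) \<le> inverse (Suc m)" if "m \<le> n" for m n :: nat
    using that by (simp add: le_imp_inverse_le)
  then have "incseq A"
    unfolding incseq_def A_def by (force intro: order.strict_trans1[rotated])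
  moreover have "(\<Union>n. A n) = {\<omega>\<in>space M. a < Z \<omega> \<and> P \<omega>}"
  proof (intro equalityI subsetI)
    fix \<omega> assume "\<omega> \<in> {\<omega>\<in>space M. a < Z \<omega> \<and> P \<omega>}"
    moreover from this obtain n where "inverse (Suc n) < Z \<omega> - a"
      using reals_Archimedean[of "Z \<omega> - a"] by auto
    ultimately show "\<omega> \<in> (\<Union>n. A n)" by (auto simp: A_def algebra_simps)
  next
    fix \<omega> assume "\<omega> \<in> (\<Union>n. A n)"
    then obtain n where "a + inverse (Suc n) < Z \<omega>" "\<omega> \<in> space M" "P \<omega>"
      by (auto simp: A_def)
    moreover have "0 < inverse (real (Suc n))" by simp
    ultimately show "\<omega> \<in> {\<omega>\<in>space M. a < Z \<omega> \<and> P \<omega>}"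
      by (metis (mono_tags, lifting) less_add_same_cancel1 mem_Collect_eq order.strict_trans)
  qed
  ultimately show ?thesis
    using finite_Lim_measure_incseq[of A] by (simp add: A_def[abs_def] image_subset_iff)
qed

lemma (in finite_measure) measure_Collect_less_shift_tendsto_le:
  fixes Z :: "'a \<Rightarrow> real"
  assumes [measurable]: "Z \<in> borel_measurable M" "Measurable.pred M P"
  shows "(\<lambda>n. measure M {\<omega>\<in>space M. a - inverse (Suc n) < Z \<omega> \<and> P \<omega>})
           \<longlonglongrightarrow> measure M {\<omega>\<in>space M. a \<le> Z \<omega> \<and> P \<omega>}"
proof -
  define A where "A n = {\<omega>\<in>space M. a - inverse (Suc n) < Z \<omega> \<and> P \<omega>}" for n
  have "inverse (Suc n) \<le> inverse (Suc m)" if "m \<le> n" for m n :: nat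
    using that by (simp add: le_imp_inverse_le)
  then have "decseq A"
    unfolding decseq_def A_def by (auto intro: le_less_trans[rotated] simp del: of_nat_Suc)
  moreover have "(\<Inter>n. A n) = {\<omega>\<in>space M. a \<le> Z \<omega> \<and> P \<omega>}"
  proof (intro equalityI subsetI)
    fix \<omega> assume \<omega>: "\<omega> \<in> (\<Inter>n. A n)"
    have "a \<le> Z \<omega>"
    proof (rule ccontr)
      assume "\<not> a \<le> Z \<omega>"
      then obtain n where "inverse (Suc n) < a - Z \<omega>"
        using reals_Archimedean[of "a - Z \<omega>"] by auto
      moreover from \<omega> have "a - inverse (Suc n) < Z \<omega>" by (auto simp: A_def)
      ultimately show False by linarith
    qed
    with \<omega> show "\<omega> \<in> {\<omega>\<in>space M. a \<le> Z \<omega> \<and> P \<omega>}" by (auto simp: A_def)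
  next
    fix \<omega> assume "\<omega> \<in> {\<omega>\<in>space M. a \<le> Z \<omega> \<and> P \<omega>}"
    moreover have "0 < inverse (real (Suc n))" for n by simp
    ultimately show "\<omega> \<in> (\<Inter>n. A n)"
      by (auto simp: A_def intro: less_le_trans[of _ a])
  qed
  ultimately show ?thesis
    using finite_Lim_measure_decseq[of A] by (simp add: A_def[abs_def] image_subset_iff)
qed

section \<open>Comonotonic families\<close>

lemma up_closed_subset_total:
  fixes A B :: "'a::linorder set"
  assumes "\<And>x y. x \<in> A \<Longrightarrow> x \<le> y \<Longrightarrow> y \<in> A" and "\<And>x y. x \<in> B \<Longrightarrow> x \<le> y \<Longrightarrow> y \<in> B"
  shows "A \<subseteq> B \<or> B \<subseteq> A"
  using assms by (metis linear subsetI)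

lemma mono_preimages_subset_chain:
  fixes \<phi> :: "'i \<Rightarrow> real \<Rightarrow> real"
  assumes "\<And>k. k \<in> C \<Longrightarrow> mono (\<phi> k)"
    and "\<And>k x y. k \<in> C \<Longrightarrow> x \<in> U k \<Longrightarrow> x \<le> y \<Longrightarrow> y \<in> U k"
  shows "subset.chain UNIV ((\<lambda>k. \<phi> k -` U k) ` C)"
proof -
  have up: "y \<in> \<phi> k -` U k" if "k \<in> C" "x \<in> \<phi> k -` U k" "x \<le> y" for k x y
    using assms that by (meson monoD vimageE vimageI)
  have "\<phi> k -` U k \<subseteq> \<phi> l -` U l \<or> \<phi> l -` U l \<subseteq> \<phi> k -` U k" if "k \<in> C" "l \<in> C" for k l
    using up that by (intro up_closed_subset_total) blast+
  then show ?thesis unfolding subset.chain_def by blast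
qed

lemma comonotonicE:
  fixes X :: "'i \<Rightarrow> 'a \<Rightarrow> real"
  assumes "comonotonic M X C" and [measurable]: "\<And>k. k \<in> C \<Longrightarrow> X k \<in> borel_measurable M"
  obtains \<phi> :: "'i \<Rightarrow> real \<Rightarrow> real" where "\<And>k. k \<in> C \<Longrightarrow> mono (\<phi> k)"
    and "\<And>\<Phi>. Measurable.pred (Pi\<^sub>M C (\<lambda>_. borel)) \<Phi> \<Longrightarrow> (\<And>t. \<Phi> (\<lambda>k\<in>C. \<phi> k t))
           \<Longrightarrow> AE \<omega> in M. \<Phi> (\<lambda>k\<in>C. X k \<omega>)"
proof -
  obtain W and \<phi> :: "'i \<Rightarrow> real \<Rightarrow> real" where [measurable]: "W \<in> borel_measurable M"
    and mono: "\<forall>k\<in>C. mono (\<phi> k)"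
    and distr_eq: "distr M (Pi\<^sub>M C (\<lambda>_. borel)) (\<lambda>\<omega>. \<lambda>k\<in>C. X k \<omega>)
                 = distr M (Pi\<^sub>M C (\<lambda>_. borel)) (\<lambda>\<omega>. \<lambda>k\<in>C. \<phi> k (W \<omega>))"
    using assms(1) unfolding comonotonic_def by blast
  have [measurable]: "\<phi> k \<in> borel_measurable borel" if "k \<in> C" for k
    using mono that by (blast intro: borel_measurable_mono)
  have "AE \<omega> in M. \<Phi> (\<lambda>k\<in>C. X k \<omega>)"
    if [measurable]: "Measurable.pred (Pi\<^sub>M C (\<lambda>_. borel)) \<Phi>" and \<Phi>: "\<And>t. \<Phi> (\<lambda>k\<in>C. \<phi> k t)" for \<Phi>
  proof -
    have "AE x in distr M (Pi\<^sub>M C (\<lambda>_. borel)) (\<lambda>\<omega>. \<lambda>k\<in>C. \<phi> k (W \<omega>)). \<Phi> x"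
      using \<Phi> by (subst AE_distr_iff) auto
    then have "AE x in distr M (Pi\<^sub>M C (\<lambda>_. borel)) (\<lambda>\<omega>. \<lambda>k\<in>C. X k \<omega>). \<Phi> x"
      unfolding distr_eq .
    then show ?thesis by (subst (asm) AE_distr_iff) auto
  qed
  with mono that show ?thesis by blast
qed

lemma comonotonic_AE_greatest_event:
  fixes X :: "'i \<Rightarrow> 'a \<Rightarrow> real"
  assumes "comonotonic M X C" "finite C" "C \<noteq> {}"
    and [measurable]: "\<And>k. k \<in> C \<Longrightarrow> X k \<in> borel_measurable M" "\<And>k. k \<in> C \<Longrightarrow> U k \<in> sets borel"
    and "\<And>k x y. k \<in> C \<Longrightarrow> x \<in> U k \<Longrightarrow> x \<le> y \<Longrightarrow> y \<in> U k"
  shows "\<exists>m\<in>C. AE \<omega> in M. \<forall>k\<in>C. X k \<omega> \<in> U k \<longrightarrow> X m \<omega> \<in> U m"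
proof (rule comonotonicE[OF assms(1,4)])
  fix \<phi> :: "'i \<Rightarrow> real \<Rightarrow> real"
  assume mono: "\<And>k. k \<in> C \<Longrightarrow> mono (\<phi> k)"
    and transfer: "\<And>\<Phi>. Measurable.pred (Pi\<^sub>M C (\<lambda>_. borel)) \<Phi> \<Longrightarrow> (\<And>t. \<Phi> (\<lambda>k\<in>C. \<phi> k t))
           \<Longrightarrow> AE \<omega> in M. \<Phi> (\<lambda>k\<in>C. X k \<omega>)"
  have "\<Union>((\<lambda>k. \<phi> k -` U k) ` C) \<in> (\<lambda>k. \<phi> k -` U k) ` C"
    using assms(2,3) by (intro Union_in_chain[OF _ _ mono_preimages_subset_chain[OF mono assms(6)]]) auto
  then obtain m where m: "m \<in> C" and union_eq: "\<Union>((\<lambda>k. \<phi> k -` U k) ` C) = \<phi> m -` U m"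
    by (rule imageE)
  have m_max: "\<And>k t. k \<in> C \<Longrightarrow> \<phi> k t \<in> U k \<Longrightarrow> \<phi> m t \<in> U m"
    using union_eq by blast
  have "Measurable.pred (Pi\<^sub>M C (\<lambda>_. borel)) (\<lambda>x. \<forall>k\<in>C. x k \<in> U k \<longrightarrow> x m \<in> U m)"
    using assms(2) m(1) by measurable
  then have "AE \<omega> in M. (\<lambda>x. \<forall>k\<in>C. x k \<in> U k \<longrightarrow> x m \<in> U m) (\<lambda>k\<in>C. X k \<omega>)"
    by (rule transfer) (use m m_max in auto)
  then show ?thesis using m by auto
qed

lemma comonotonic_AE_least_event:
  fixes X :: "'i \<Rightarrow> 'a \<Rightarrow> real"
  assumes "comonotonic M X C" "finite C" "C \<noteq> {}"
    and [measurable]: "\<And>k. k \<in> C \<Longrightarrow> X k \<in> borel_measurable M" "\<And>k. k \<in> C \<Longrightarrow> U k \<in> sets borel"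
    and "\<And>k x y. k \<in> C \<Longrightarrow> x \<in> U k \<Longrightarrow> x \<le> y \<Longrightarrow> y \<in> U k"
  shows "\<exists>m\<in>C. AE \<omega> in M. X m \<omega> \<in> U m \<longrightarrow> (\<forall>k\<in>C. X k \<omega> \<in> U k)"
proof (rule comonotonicE[OF assms(1,4)])
  fix \<phi> :: "'i \<Rightarrow> real \<Rightarrow> real"
  assume mono: "\<And>k. k \<in> C \<Longrightarrow> mono (\<phi> k)"
    and transfer: "\<And>\<Phi>. Measurable.pred (Pi\<^sub>M C (\<lambda>_. borel)) \<Phi> \<Longrightarrow> (\<And>t. \<Phi> (\<lambda>k\<in>C. \<phi> k t))
           \<Longrightarrow> AE \<omega> in M. \<Phi> (\<lambda>k\<in>C. X k \<omega>)"
  have "\<Inter>((\<lambda>k. \<phi> k -` U k) ` C) \<in> (\<lambda>k. \<phi> k -` U k) ` C"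
    using assms(2,3) by (intro Inter_in_chain[OF _ _ mono_preimages_subset_chain[OF mono assms(6)]]) auto
  then obtain m where m: "m \<in> C" and inter_eq: "\<Inter>((\<lambda>k. \<phi> k -` U k) ` C) = \<phi> m -` U m"
    by (rule imageE)
  have m_min: "\<And>k t. k \<in> C \<Longrightarrow> \<phi> m t \<in> U m \<Longrightarrow> \<phi> k t \<in> U k"
    using inter_eq by blast
  have "Measurable.pred (Pi\<^sub>M C (\<lambda>_. borel)) (\<lambda>x. x m \<in> U m \<longrightarrow> (\<forall>k\<in>C. x k \<in> U k))"
    using assms(2) m(1) by measurable
  then have "AE \<omega> in M. (\<lambda>x. x m \<in> U m \<longrightarrow> (\<forall>k\<in>C. x k \<in> U k)) (\<lambda>k\<in>C. X k \<omega>)"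
    by (rule transfer) (use m m_min in auto)
  then show ?thesis using m by auto
qed

lemma comonotonic_subset:
  fixes X :: "'i \<Rightarrow> 'a \<Rightarrow> real"
  assumes "comonotonic M X C" "C' \<subseteq> C" and [measurable]: "\<And>k. k \<in> C \<Longrightarrow> X k \<in> borel_measurable M"
  shows "comonotonic M X C'"
proof -
  obtain W and \<phi> :: "'i \<Rightarrow> real \<Rightarrow> real" where W: "W \<in> borel_measurable M"
    and mono: "\<forall>k\<in>C. mono (\<phi> k)"
    and distr_eq: "distr M (Pi\<^sub>M C (\<lambda>_. borel)) (\<lambda>\<omega>. \<lambda>k\<in>C. X k \<omega>)
                 = distr M (Pi\<^sub>M C (\<lambda>_. borel)) (\<lambda>\<omega>. \<lambda>k\<in>C. \<phi> k (W \<omega>))"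
    using assms(1) unfolding comonotonic_def by blast
  have [measurable]: "W \<in> borel_measurable M" by (fact W)
  have [measurable]: "\<phi> k \<in> borel_measurable borel" if "k \<in> C" for k
    using mono that by (blast intro: borel_measurable_mono)
  have restrict: "(\<lambda>x. restrict x C') \<in> Pi\<^sub>M C (\<lambda>_. borel) \<rightarrow>\<^sub>M Pi\<^sub>M C' (\<lambda>_. borel :: real measure)"
    using assms(2) by (rule measurable_restrict_subset)
  have restrict_comp: "(\<lambda>x. restrict x C') \<circ> (\<lambda>\<omega>. \<lambda>k\<in>C. f k \<omega>) = (\<lambda>\<omega>. \<lambda>k\<in>C'. f k \<omega>)"
    for f :: "'i \<Rightarrow> 'a \<Rightarrow> real"
    using assms(2) by (simp add: comp_def Int_absorb1)
  have "distr M (Pi\<^sub>M C' (\<lambda>_. borel)) (\<lambda>\<omega>. \<lambda>k\<in>C'. X k \<omega>)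
      = distr (distr M (Pi\<^sub>M C (\<lambda>_. borel)) (\<lambda>\<omega>. \<lambda>k\<in>C. X k \<omega>)) (Pi\<^sub>M C' (\<lambda>_. borel))
          (\<lambda>x. restrict x C')"
    by (subst distr_distr[OF restrict]) (measurable, simp only: restrict_comp)
  also have "\<dots> = distr M (Pi\<^sub>M C' (\<lambda>_. borel)) (\<lambda>\<omega>. \<lambda>k\<in>C'. \<phi> k (W \<omega>))"
    unfolding distr_eq
    by (subst distr_distr[OF restrict]) (measurable, simp only: restrict_comp[of "\<lambda>k \<omega>. \<phi> k (W \<omega>)"])
  finally have "distr M (Pi\<^sub>M C' (\<lambda>_. borel)) (\<lambda>\<omega>. \<lambda>k\<in>C'. X k \<omega>)
              = distr M (Pi\<^sub>M C' (\<lambda>_. borel)) (\<lambda>\<omega>. \<lambda>k\<in>C'. \<phi> k (W \<omega>))" .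
  moreover have "\<forall>k\<in>C'. mono (\<phi> k)" using mono assms(2) by blast
  ultimately show ?thesis
    unfolding comonotonic_def by (intro exI[of _ W] exI[of _ \<phi>] conjI W)
qed

lemma (in finite_measure) comonotonic_sum_exceed:
  fixes X :: "'i \<Rightarrow> 'a \<Rightarrow> real"
  assumes "comonotonic M X C" "finite C" "C \<noteq> {}"
    and [measurable]: "\<And>k. k \<in> C \<Longrightarrow> X k \<in> borel_measurable M" "Measurable.pred M P"
  shows "\<exists>m\<in>C. measure M {\<omega>\<in>space M. (\<Sum>k\<in>C. v k) < (\<Sum>k\<in>C. X k \<omega>) \<and> P \<omega>}
               \<le> measure M {\<omega>\<in>space M. v m < X m \<omega> \<and> P \<omega>}"
proof -
  have "\<exists>m\<in>C. AE \<omega> in M. \<forall>k\<in>C. X k \<omega> \<in> {v k<..} \<longrightarrow> X m \<omega> \<in> {v m<..}"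
    by (rule comonotonic_AE_greatest_event[OF assms(1-4)]) auto
  then obtain m where m: "m \<in> C" and greatest: "AE \<omega> in M. \<forall>k\<in>C. v k < X k \<omega> \<longrightarrow> v m < X m \<omega>"
    by auto
  have [measurable]: "X m \<in> borel_measurable M" using m by simp
  have "\<exists>k\<in>C. v k < X k \<omega>" if "(\<Sum>k\<in>C. v k) < (\<Sum>k\<in>C. X k \<omega>)" for \<omega>
    using that sum_mono[of C "\<lambda>k. X k \<omega>" v] by (meson not_le)
  with greatest have "AE \<omega> in M. \<omega> \<in> {\<omega>\<in>space M. (\<Sum>k\<in>C. v k) < (\<Sum>k\<in>C. X k \<omega>) \<and> P \<omega>}
                            \<longrightarrow> \<omega> \<in> {\<omega>\<in>space M. v m < X m \<omega> \<and> P \<omega>}"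
    by (auto elim!: AE_mp)
  then show ?thesis using m by (intro bexI[of _ m] finite_measure_mono_AE) auto
qed

lemma (in finite_measure) comonotonic_sum_reach:
  fixes X :: "'i \<Rightarrow> 'a \<Rightarrow> real"
  assumes "comonotonic M X C" "finite C"
    and [measurable]: "\<And>k. k \<in> C \<Longrightarrow> X k \<in> borel_measurable M" "Measurable.pred M P"
    and "\<And>k \<omega>. k \<in> C \<Longrightarrow> \<omega> \<in> space M \<Longrightarrow> 0 \<le> X k \<omega>"
    and "\<And>k. k \<in> C \<Longrightarrow> 0 \<le> v k" "0 < (\<Sum>k\<in>C. v k)"
  shows "\<exists>m\<in>C. 0 < v m \<and> measure M {\<omega>\<in>space M. v m \<le> X m \<omega> \<and> P \<omega>}
               \<le> measure M {\<omega>\<in>space M. (\<Sum>k\<in>C. v k) \<le> (\<Sum>k\<in>C. X k \<omega>) \<and> P \<omega>}"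
proof -
  define C' where "C' = {k\<in>C. 0 < v k}"
  have C': "C' \<subseteq> C" "finite C'" using assms(2) by (auto simp: C'_def)
  have "C' \<noteq> {}"
  proof
    assume "C' = {}"
    then have "\<And>k. k \<in> C \<Longrightarrow> v k = 0" using assms(6) by (force simp: C'_def)
    with assms(7) show False by simp
  qed
  with C' have "\<exists>m\<in>C'. AE \<omega> in M. X m \<omega> \<in> {v m..} \<longrightarrow> (\<forall>k\<in>C'. X k \<omega> \<in> {v k..})"
    by (intro comonotonic_AE_least_event comonotonic_subset[OF assms(1)]) auto
  then obtain m where m: "m \<in> C" "0 < v m"
    and least: "AE \<omega> in M. v m \<le> X m \<omega> \<longrightarrow> (\<forall>k\<in>C'. v k \<le> X k \<omega>)"
    by (auto simp: C'_def)
  have [measurable]: "X m \<in> borel_measurable M" using m by simp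
  have "(\<Sum>k\<in>C. v k) \<le> (\<Sum>k\<in>C. X k \<omega>)" if "\<omega> \<in> space M" "\<forall>k\<in>C'. v k \<le> X k \<omega>" for \<omega>
  proof (rule sum_mono)
    fix k assume "k \<in> C"
    with that assms(5,6)[of k] show "v k \<le> X k \<omega>" by (cases "0 < v k") (auto simp: C'_def)
  qed
  with least have "AE \<omega> in M. \<omega> \<in> {\<omega>\<in>space M. v m \<le> X m \<omega> \<and> P \<omega>}
                          \<longrightarrow> \<omega> \<in> {\<omega>\<in>space M. (\<Sum>k\<in>C. v k) \<le> (\<Sum>k\<in>C. X k \<omega>) \<and> P \<omega>}"
    by (auto elim!: AE_mp)
  then show ?thesis using m by (intro bexI[of _ m] conjI finite_measure_mono_AE) auto
qed

section \<open>Optimality conditions for absolute-value penalties\<close>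

definition risk_term :: "'a measure \<Rightarrow> ('i \<Rightarrow> 'a \<Rightarrow> real) \<Rightarrow> 'i set \<Rightarrow> real \<Rightarrow> 'i \<Rightarrow> real \<Rightarrow> real"
  where "risk_term M Y I u k a = integral\<^sup>L M (\<lambda>\<omega>. \<bar>a - Y k \<omega>\<bar> * indicator {\<omega>. Y k \<omega> > a} \<omega>
           * indicator {\<omega>. (\<Sum>l\<in>I. Y l \<omega>) \<le> u} \<omega>)"

definition tail_prob_gt :: "'a measure \<Rightarrow> ('i \<Rightarrow> 'a \<Rightarrow> real) \<Rightarrow> 'i set \<Rightarrow> real \<Rightarrow> 'i \<Rightarrow> real \<Rightarrow> real"
  where "tail_prob_gt M Y I u k a = measure M {\<omega>\<in>space M. a < Y k \<omega> \<and> (\<Sum>l\<in>I. Y l \<omega>) \<le> u}"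

definition tail_prob_ge :: "'a measure \<Rightarrow> ('i \<Rightarrow> 'a \<Rightarrow> real) \<Rightarrow> 'i set \<Rightarrow> real \<Rightarrow> 'i \<Rightarrow> real \<Rightarrow> real"
  where "tail_prob_ge M Y I u k a = measure M {\<omega>\<in>space M. a \<le> Y k \<omega> \<and> (\<Sum>l\<in>I. Y l \<omega>) \<le> u}"

lemma risk_ind_abs_eq_sum_risk_term:
  "risk_ind (\<lambda>_. abs) M Y I u v = (\<Sum>k\<in>I. risk_term M Y I u k (v k))"
  by (simp add: risk_ind_def risk_term_def)

lemma sum_update_two:
  fixes f :: "'i \<Rightarrow> real \<Rightarrow> real"
  assumes "finite I" "j \<in> I" "k \<in> I" "j \<noteq> k"
  shows "(\<Sum>i\<in>I. f i ((v(j := a, k := b)) i))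
           = (\<Sum>i\<in>I. f i (v i)) + (f j a - f j (v j)) + (f k b - f k (v k))"
proof -
  have "(\<Sum>i\<in>I. f i ((v(j := a, k := b)) i)) - (\<Sum>i\<in>I. f i (v i))
      = (\<Sum>i\<in>I. f i ((v(j := a, k := b)) i) - f i (v i))"
    by (simp add: sum_subtractf)
  also have "\<dots> = (\<Sum>i\<in>{j, k}. f i ((v(j := a, k := b)) i) - f i (v i))"
    using assms by (intro sum.mono_neutral_right) auto
  also have "\<dots> = (f j a - f j (v j)) + (f k b - f k (v k))"
    using assms(4) by simp
  finally show ?thesis by simp
qed

locale nonneg_risks = prob_space M for M :: "'a measure" +
  fixes Y :: "'i \<Rightarrow> 'a \<Rightarrow> real" and I :: "'i set"
  assumes finite_index: "finite I"
    and measurable_risk[measurable]: "\<And>k. k \<in> I \<Longrightarrow> Y k \<in> borel_measurable M"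
    and nonneg_risk: "\<And>k \<omega>. k \<in> I \<Longrightarrow> \<omega> \<in> space M \<Longrightarrow> 0 \<le> Y k \<omega>"
begin

abbreviation total :: "'a \<Rightarrow> real" where "total \<omega> \<equiv> \<Sum>l\<in>I. Y l \<omega>"

lemma measurable_total[measurable]: "total \<in> borel_measurable M"
  by measurable

lemma integrable_risk_term:
  assumes "k \<in> I"
  shows "integrable M (\<lambda>\<omega>. \<bar>a - Y k \<omega>\<bar> * indicator {\<omega>. Y k \<omega> > a} \<omega> * indicator {\<omega>. total \<omega> \<le> u} \<omega>)"
proof (rule integrable_const_bound[where B="\<bar>a\<bar> + \<bar>u\<bar>"])
  have bound: "0 \<le> Y k \<omega> \<and> Y k \<omega> \<le> total \<omega>" if "\<omega> \<in> space M" for \<omega>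
    using assms that finite_index nonneg_risk by (auto intro: member_le_sum)
  then show "AE \<omega> in M. norm (\<bar>a - Y k \<omega>\<bar> * indicator {\<omega>. Y k \<omega> > a} \<omega> * indicator {\<omega>. total \<omega> \<le> u} \<omega>)
               \<le> \<bar>a\<bar> + \<bar>u\<bar>"
    by (intro AE_I2) (auto simp: indicator_def dest!: bound)
qed (use assms in measurable)

lemma risk_term_lower_bound:
  assumes "k \<in> I" and [measurable]: "Measurable.pred borel R"
    and pointwise: "\<And>y. 0 \<le> y \<Longrightarrow>
       \<bar>a - y\<bar> * of_bool (a < y) + c * of_bool (R y) \<le> \<bar>b - y\<bar> * of_bool (b < y)"
  shows "risk_term M Y I u k a + c * measure M {\<omega>\<in>space M. R (Y k \<omega>) \<and> total \<omega> \<le> u}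
           \<le> risk_term M Y I u k b"
proof -
  let ?E = "{\<omega>\<in>space M. R (Y k \<omega>) \<and> total \<omega> \<le> u}"
  have [measurable]: "Y k \<in> borel_measurable M" using assms(1) by simp
  have int_E: "integrable M (indicator ?E :: 'a \<Rightarrow> real)"
    by (intro integrable_real_indicator) (auto simp: less_top[symmetric])
  have "risk_term M Y I u k a + c * measure M ?E
      = integral\<^sup>L M (\<lambda>\<omega>. \<bar>a - Y k \<omega>\<bar> * indicator {\<omega>. Y k \<omega> > a} \<omega>
           * indicator {\<omega>. total \<omega> \<le> u} \<omega> + c * indicator ?E \<omega>)"
    unfolding risk_term_def using integrable_risk_term[OF assms(1)] int_E by simp
  also have "\<dots> \<le> risk_term M Y I u k b"
    unfolding risk_term_def
  proof (rule integral_mono)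
    fix \<omega> assume "\<omega> \<in> space M"
    with pointwise[of "Y k \<omega>"] nonneg_risk[OF assms(1)]
    show "\<bar>a - Y k \<omega>\<bar> * indicator {\<omega>. Y k \<omega> > a} \<omega> * indicator {\<omega>. total \<omega> \<le> u} \<omega> + c * indicator ?E \<omega>
        \<le> \<bar>b - Y k \<omega>\<bar> * indicator {\<omega>. Y k \<omega> > b} \<omega> * indicator {\<omega>. total \<omega> \<le> u} \<omega>"
      by (auto simp: indicator_def)
  qed (use integrable_risk_term[OF assms(1)] int_E in auto)
  finally show ?thesis .
qed

lemma risk_term_subgradient_gt:
  assumes "k \<in> I"
  shows "risk_term M Y I u k a + (a - b) * tail_prob_gt M Y I u k a \<le> risk_term M Y I u k b"
  unfolding tail_prob_gt_def by (rule risk_term_lower_bound[OF assms]) auto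

lemma risk_term_subgradient_ge:
  assumes "k \<in> I"
  shows "risk_term M Y I u k a + (a - b) * tail_prob_ge M Y I u k a \<le> risk_term M Y I u k b"
  unfolding tail_prob_ge_def by (rule risk_term_lower_bound[OF assms]) auto

lemma is_minimizer_abs_if_level:
  assumes v: "v \<in> alloc_set I u"
    and gt: "\<And>j. j \<in> I \<Longrightarrow> tail_prob_gt M Y I u j (v j) \<le> L"
    and ge: "\<And>j. j \<in> I \<Longrightarrow> 0 < v j \<Longrightarrow> L \<le> tail_prob_ge M Y I u j (v j)"
  shows "is_minimizer (\<lambda>_. abs) M Y I u v"
  unfolding is_minimizer_def
proof (intro conjI ballI)
  fix w assume w: "w \<in> alloc_set I u"
  have term_le: "risk_term M Y I u j (v j) + (v j - w j) * L \<le> risk_term M Y I u j (w j)" if j: "j \<in> I" for j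
  proof (cases "w j \<le> v j")
    case True
    show ?thesis
    proof (cases "0 < v j")
      case True
      have "(v j - w j) * L \<le> (v j - w j) * tail_prob_ge M Y I u j (v j)"
        using ge[OF j True] \<open>w j \<le> v j\<close> by (intro mult_left_mono) auto
      with risk_term_subgradient_ge[OF j, where u=u and a="v j" and b="w j"] show ?thesis by linarith
    next
      case False
      with \<open>w j \<le> v j\<close> v w j have "w j = v j" by (auto simp: alloc_set_def)
      then show ?thesis by simp
    qed
  next
    case False
    then have "(v j - w j) * L \<le> (v j - w j) * tail_prob_gt M Y I u j (v j)"
      using gt[OF j] by (intro mult_left_mono_neg) auto
    with risk_term_subgradient_gt[OF j, where u=u and a="v j" and b="w j"] show ?thesis by linarith
  qed
  have "(\<Sum>j\<in>I. v j - w j) = 0"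
    using v w by (simp add: alloc_set_def sum_subtractf)
  then have "(\<Sum>j\<in>I. risk_term M Y I u j (v j)) = (\<Sum>j\<in>I. risk_term M Y I u j (v j) + (v j - w j) * L)"
    by (simp add: sum.distrib sum_distrib_right[symmetric])
  also have "\<dots> \<le> (\<Sum>j\<in>I. risk_term M Y I u j (w j))"
    by (intro sum_mono term_le)
  finally show "risk_ind (\<lambda>_. abs) M Y I u v \<le> risk_ind (\<lambda>_. abs) M Y I u w"
    by (simp add: risk_ind_abs_eq_sum_risk_term)
qed (fact v)

lemma tail_prob_gt_shift_le_if_minimizer:
  assumes min: "is_minimizer (\<lambda>_. abs) M Y I u v"
    and jk: "j \<in> I" "k \<in> I" "j \<noteq> k" and e: "0 < e" "e \<le> v k"
  shows "tail_prob_gt M Y I u j (v j + e) \<le> tail_prob_gt M Y I u k (v k - e)"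
proof -
  define w where "w = v(j := v j + e, k := v k - e)"
  have v: "v \<in> alloc_set I u" using min by (simp add: is_minimizer_def)
  have "v j + v k = (\<Sum>i\<in>{j, k}. v i)" using jk(3) by simp
  also have "\<dots> \<le> (\<Sum>i\<in>I. v i)"
    using v jk finite_index by (intro sum_mono2) (auto simp: alloc_set_def)
  finally have "v j + v k \<le> u" using v by (simp add: alloc_set_def)
  moreover have "(\<Sum>i\<in>I. w i) = (\<Sum>i\<in>I. v i)"
    unfolding w_def using sum_update_two[OF finite_index jk, of "\<lambda>_ x. x"] by simp
  ultimately have "w \<in> alloc_set I u"
    using v jk e by (auto simp: alloc_set_def w_def)
  with min have "risk_ind (\<lambda>_. abs) M Y I u v \<le> risk_ind (\<lambda>_. abs) M Y I u w"
    by (simp add: is_minimizer_def)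
  then have "0 \<le> (risk_term M Y I u j (v j + e) - risk_term M Y I u j (v j))
                + (risk_term M Y I u k (v k - e) - risk_term M Y I u k (v k))"
    unfolding risk_ind_abs_eq_sum_risk_term w_def
      sum_update_two[OF finite_index jk, of "risk_term M Y I u"] by simp
  moreover have "risk_term M Y I u j (v j + e) + e * tail_prob_gt M Y I u j (v j + e)
                   \<le> risk_term M Y I u j (v j)"
    using risk_term_subgradient_gt[OF jk(1), where u=u and a="v j + e" and b="v j"] by simp
  moreover have "risk_term M Y I u k (v k - e) - e * tail_prob_gt M Y I u k (v k - e)
                   \<le> risk_term M Y I u k (v k)"
    using risk_term_subgradient_gt[OF jk(2), where u=u and a="v k - e" and b="v k"] by simp
  ultimately have "e * tail_prob_gt M Y I u j (v j + e) \<le> e * tail_prob_gt M Y I u k (v k - e)"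
    by linarith
  with e show ?thesis by simp
qed

lemma tail_prob_gt_le_tail_prob_ge_if_minimizer:
  assumes min: "is_minimizer (\<lambda>_. abs) M Y I u v" and jk: "j \<in> I" "k \<in> I" and pos: "0 < v k"
  shows "tail_prob_gt M Y I u j (v j) \<le> tail_prob_ge M Y I u k (v k)"
proof -
  have [measurable]: "Y j \<in> borel_measurable M" "Y k \<in> borel_measurable M" using jk by simp_all
  show ?thesis
  proof (cases "j = k")
    case True
    then show ?thesis
      unfolding tail_prob_gt_def tail_prob_ge_def by (intro finite_measure_mono) auto
  next
    case False
    have "(\<lambda>n. tail_prob_gt M Y I u j (v j + inverse (Suc n))) \<longlonglongrightarrow> tail_prob_gt M Y I u j (v j)"
      unfolding tail_prob_gt_def by (rule measure_Collect_less_shift_tendsto) measurable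
    moreover have "(\<lambda>n. tail_prob_gt M Y I u k (v k - inverse (Suc n))) \<longlonglongrightarrow> tail_prob_ge M Y I u k (v k)"
      unfolding tail_prob_gt_def tail_prob_ge_def by (rule measure_Collect_less_shift_tendsto_le) measurable
    moreover obtain N where N: "inverse (Suc N) < v k"
      using reals_Archimedean[OF pos] by blast
    have "tail_prob_gt M Y I u j (v j + inverse (Suc n)) \<le> tail_prob_gt M Y I u k (v k - inverse (Suc n))"
      if "N \<le> n" for n
    proof (rule tail_prob_gt_shift_le_if_minimizer[OF min jk False])
      have "inverse (real (Suc n)) \<le> inverse (Suc N)"
        using that by (simp add: le_imp_inverse_le)
      with N show "inverse (real (Suc n)) \<le> v k" by linarith
    qed simp
    ultimately show ?thesis by (intro LIMSEQ_le) auto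
  qed
qed

lemma is_minimizer_abs_iff:
  "is_minimizer (\<lambda>_. abs) M Y I u v \<longleftrightarrow> v \<in> alloc_set I u \<and>
     (\<exists>L. (\<forall>j\<in>I. tail_prob_gt M Y I u j (v j) \<le> L) \<and> (\<forall>j\<in>I. 0 < v j \<longrightarrow> L \<le> tail_prob_ge M Y I u j (v j)))"
proof
  assume min: "is_minimizer (\<lambda>_. abs) M Y I u v"
  define L where "L = Max (insert 0 ((\<lambda>j. tail_prob_gt M Y I u j (v j)) ` I))"
  have "tail_prob_gt M Y I u j (v j) \<le> L" if "j \<in> I" for j
    unfolding L_def using finite_index that by (intro Max_ge) auto
  moreover have "L \<le> tail_prob_ge M Y I u k (v k)" if "k \<in> I" "0 < v k" for k
    unfolding L_def using finite_index that tail_prob_gt_le_tail_prob_ge_if_minimizer[OF min _ that]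
    by (auto simp: tail_prob_ge_def)
  ultimately show "v \<in> alloc_set I u \<and>
     (\<exists>L. (\<forall>j\<in>I. tail_prob_gt M Y I u j (v j) \<le> L) \<and> (\<forall>j\<in>I. 0 < v j \<longrightarrow> L \<le> tail_prob_ge M Y I u j (v j)))"
    using min by (auto simp: is_minimizer_def)
qed (auto intro: is_minimizer_abs_if_level)

end

section \<open>Aggregating comonotonic risks\<close>

definition agg_alloc :: "'i set \<Rightarrow> 'i set \<Rightarrow> ('i \<Rightarrow> real) \<Rightarrow> 'i option \<Rightarrow> real" where
  "agg_alloc D CR v = (\<lambda>j. case j of
                None \<Rightarrow> (\<Sum>k\<in>CR. v k)
              | Some i \<Rightarrow> (if i \<in> D - CR then v i else 0))"

lemma sum_agg_index:
  assumes "finite D" "CR \<subseteq> D"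
  shows "(\<Sum>j\<in>agg_index D CR. g j) = (\<Sum>i\<in>D - CR. g (Some i)) + g None"
proof -
  have "(\<Sum>j\<in>agg_index D CR. g j) = (\<Sum>j\<in>Some ` (D - CR). g j) + g None"
    unfolding agg_index_def using assms by (subst sum.union_disjoint) auto
  then show ?thesis by (simp add: sum.reindex)
qed

lemma sum_agg_risks:
  assumes "finite D" "CR \<subseteq> D"
  shows "(\<Sum>j\<in>agg_index D CR. agg_risks X CR j \<omega>) = (\<Sum>k\<in>D. X k \<omega>)"
  using assms by (simp add: sum_agg_index agg_risks_def sum.subset_diff[OF assms(2,1)])

lemma agg_alloc_in_alloc_set:
  assumes "finite D" "CR \<subseteq> D" "v \<in> alloc_set D u"
  shows "agg_alloc D CR v \<in> alloc_set (agg_index D CR) u"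
proof -
  have v: "\<And>k. k \<in> D \<Longrightarrow> 0 \<le> v k \<and> v k \<le> u" "(\<Sum>k\<in>D. v k) = u"
    using assms(3) by (auto simp: alloc_set_def)
  have "(\<Sum>k\<in>CR. v k) \<le> u"
    using v assms(1,2) by (metis sum_mono2 DiffE)
  moreover have "(\<Sum>j\<in>agg_index D CR. agg_alloc D CR v j) = u"
    using assms(1,2) v(2) by (simp add: sum_agg_index agg_alloc_def sum.subset_diff[OF assms(2,1)])
  ultimately show ?thesis
    using v assms(2) by (auto simp: alloc_set_def agg_index_def agg_alloc_def intro!: sum_nonneg split: option.split)
qed

lemma nonneg_risks_agg:
  assumes "nonneg_risks M X D" "CR \<subseteq> D"
  shows "nonneg_risks M (agg_risks X CR) (agg_index D CR)"
proof -
  interpret nonneg_risks M X D by (fact assms(1))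
  show ?thesis
  proof
    show "finite (agg_index D CR)" using finite_index by (simp add: agg_index_def)
    fix k assume "k \<in> agg_index D CR"
    with assms(2) show "agg_risks X CR k \<in> borel_measurable M"
      by (cases k) (auto simp: agg_risks_def agg_index_def intro!: borel_measurable_sum)
    fix \<omega> assume "\<omega> \<in> space M"
    with \<open>k \<in> agg_index D CR\<close> assms(2) nonneg_risk show "0 \<le> agg_risks X CR k \<omega>"
      by (cases k) (auto simp: agg_risks_def agg_index_def intro!: sum_nonneg)
  qed
qed

context nonneg_risks
begin

lemma tail_prob_agg_Some:
  assumes "CR \<subseteq> I"
  shows "tail_prob_gt M (agg_risks Y CR) (agg_index I CR) u (Some i) = tail_prob_gt M Y I u i"
    and "tail_prob_ge M (agg_risks Y CR) (agg_index I CR) u (Some i) = tail_prob_ge M Y I u i"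
  unfolding tail_prob_gt_def tail_prob_ge_def sum_agg_risks[OF finite_index assms]
  by (simp_all add: agg_risks_def)

lemma tail_prob_gt_agg_None:
  assumes CR: "CR \<subseteq> I" "CR \<noteq> {}" and com: "comonotonic M Y CR"
  shows "\<exists>m\<in>CR. tail_prob_gt M (agg_risks Y CR) (agg_index I CR) u None (\<Sum>k\<in>CR. v k)
                 \<le> tail_prob_gt M Y I u m (v m)"
proof -
  have "finite CR" using CR(1) finite_index by (rule finite_subset)
  moreover have "\<And>k. k \<in> CR \<Longrightarrow> Y k \<in> borel_measurable M" using CR(1) by auto
  moreover have "Measurable.pred M (\<lambda>\<omega>. total \<omega> \<le> u)" by measurable
  ultimately show ?thesis
    using comonotonic_sum_exceed[OF com _ CR(2)]
    unfolding tail_prob_gt_def sum_agg_risks[OF finite_index CR(1)] by (simp add: agg_risks_def)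
qed

lemma tail_prob_ge_agg_None:
  assumes CR: "CR \<subseteq> I" and com: "comonotonic M Y CR"
    and v: "\<And>k. k \<in> CR \<Longrightarrow> 0 \<le> v k" "0 < (\<Sum>k\<in>CR. v k)"
  shows "\<exists>m\<in>CR. 0 < v m \<and> tail_prob_ge M Y I u m (v m)
                 \<le> tail_prob_ge M (agg_risks Y CR) (agg_index I CR) u None (\<Sum>k\<in>CR. v k)"
proof -
  have "finite CR" using CR finite_index by (rule finite_subset)
  moreover have "\<And>k. k \<in> CR \<Longrightarrow> Y k \<in> borel_measurable M" using CR by auto
  moreover have "Measurable.pred M (\<lambda>\<omega>. total \<omega> \<le> u)" by measurable
  moreover have "\<And>k \<omega>. k \<in> CR \<Longrightarrow> \<omega> \<in> space M \<Longrightarrow> 0 \<le> Y k \<omega>"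
    using CR nonneg_risk by auto
  ultimately show ?thesis
    using comonotonic_sum_reach[OF com _ _ _ _ v]
    unfolding tail_prob_ge_def sum_agg_risks[OF finite_index CR] by (simp add: agg_risks_def)
qed

lemma is_minimizer_agg_alloc:
  assumes CR: "CR \<subseteq> I" and com: "comonotonic M Y CR"
    and min: "is_minimizer (\<lambda>_. abs) M Y I u v"
  shows "is_minimizer (\<lambda>_. abs) M (agg_risks Y CR) (agg_index I CR) u (agg_alloc I CR v)"
proof -
  interpret agg: nonneg_risks M "agg_risks Y CR" "agg_index I CR"
    using nonneg_risks_axioms CR by (rule nonneg_risks_agg)
  obtain L where gt: "\<forall>j\<in>I. tail_prob_gt M Y I u j (v j) \<le> L"
    and ge: "\<forall>j\<in>I. 0 < v j \<longrightarrow> L \<le> tail_prob_ge M Y I u j (v j)"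
    using min unfolding is_minimizer_abs_iff by blast
  have v: "v \<in> alloc_set I u" using min by (simp add: is_minimizer_def)
  \<comment> \<open>The level is raised to 0 only to cover CR = {}, where the aggregate is the zero risk.\<close>
  have gt_None: "tail_prob_gt M (agg_risks Y CR) (agg_index I CR) u None (\<Sum>k\<in>CR. v k) \<le> max L 0"
  proof (cases "CR = {}")
    case True
    then show ?thesis by (simp add: tail_prob_gt_def agg_risks_def)
  next
    case False
    then obtain m where m: "m \<in> CR" and "tail_prob_gt M (agg_risks Y CR) (agg_index I CR) u None
        (\<Sum>k\<in>CR. v k) \<le> tail_prob_gt M Y I u m (v m)"
      using tail_prob_gt_agg_None[OF CR False com] by blast
    moreover have "tail_prob_gt M Y I u m (v m) \<le> L" using gt m CR by blast
    ultimately show ?thesis by linarith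
  qed
  have ge_None: "max L 0 \<le> tail_prob_ge M (agg_risks Y CR) (agg_index I CR) u None (\<Sum>k\<in>CR. v k)"
    if pos: "0 < (\<Sum>k\<in>CR. v k)"
  proof -
    have "\<And>k. k \<in> CR \<Longrightarrow> 0 \<le> v k" using CR v by (auto simp: alloc_set_def)
    then obtain m where m: "m \<in> CR" "0 < v m" and "tail_prob_ge M Y I u m (v m)
        \<le> tail_prob_ge M (agg_risks Y CR) (agg_index I CR) u None (\<Sum>k\<in>CR. v k)"
      using tail_prob_ge_agg_None[OF CR com _ pos] by blast
    moreover have "L \<le> tail_prob_ge M Y I u m (v m)" using ge m CR by blast
    moreover have "0 \<le> tail_prob_ge M Y I u m (v m)" by (simp add: tail_prob_ge_def)
    ultimately show ?thesis by linarith
  qed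
  show ?thesis
    unfolding agg.is_minimizer_abs_iff
  proof (intro conjI exI[of _ "max L 0"] ballI impI)
    show "agg_alloc I CR v \<in> alloc_set (agg_index I CR) u"
      using finite_index CR v by (rule agg_alloc_in_alloc_set)
    fix j assume "j \<in> agg_index I CR"
    then consider "j = None" | i where "j = Some i" "i \<in> I - CR"
      by (auto simp: agg_index_def)
    note cases = this
    show "tail_prob_gt M (agg_risks Y CR) (agg_index I CR) u j (agg_alloc I CR v j) \<le> max L 0"
    proof (cases rule: cases)
      case 1
      with gt_None show ?thesis by (simp add: agg_alloc_def)
    next
      case (2 i)
      with gt have "tail_prob_gt M Y I u i (v i) \<le> L" by blast
      with 2 CR show ?thesis by (simp add: agg_alloc_def tail_prob_agg_Some)
    qed
    assume pos: "0 < agg_alloc I CR v j"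
    show "max L 0 \<le> tail_prob_ge M (agg_risks Y CR) (agg_index I CR) u j (agg_alloc I CR v j)"
    proof (cases rule: cases)
      case 1
      with pos ge_None show ?thesis by (simp add: agg_alloc_def)
    next
      case (2 i)
      with pos ge have "L \<le> tail_prob_ge M Y I u i (v i)" by (simp add: agg_alloc_def)
      moreover have "0 \<le> tail_prob_ge M Y I u i (v i)" by (simp add: tail_prob_ge_def)
      ultimately show ?thesis using 2 CR by (simp add: agg_alloc_def tail_prob_agg_Some)
    qed
  qed
qed

end

theorem mainTheorem5:
  fixes M :: "'a measure" and X :: "'i \<Rightarrow> 'a \<Rightarrow> real"
    and D CR :: "'i set" and u :: real
  assumes "prob_space M"
    and "finite D" and "CR \<subseteq> D"
    and "\<And>k \<omega>. k \<in> D \<Longrightarrow> \<omega> \<in> space M \<Longrightarrow> 0 \<le> X k \<omega>"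
    and "0 \<le> u"
    and "H1 (\<lambda>_. abs) M X D u" and "H2_abs M X D u"
    and "H1 (\<lambda>_. abs) M (agg_risks X CR) (agg_index D CR) u"
    and "H2_abs M (agg_risks X CR) (agg_index D CR) u"
    and "comonotonic M X CR"
  shows "opt_alloc (\<lambda>_. abs) M (agg_risks X CR) (agg_index D CR) u
       = (\<lambda>j. case j of
                None \<Rightarrow> (\<Sum>k\<in>CR. opt_alloc (\<lambda>_. abs) M X D u k)
              | Some i \<Rightarrow> (if i \<in> D - CR then opt_alloc (\<lambda>_. abs) M X D u i else 0))"
proof -
  have meas: "\<And>k. k \<in> D \<Longrightarrow> X k \<in> borel_measurable M"
    using assms(7) by (simp add: H2_abs_def)
  interpret nonneg_risks M X D
    by (rule nonneg_risks.intro[OF assms(1) nonneg_risks_axioms.intro[OF assms(2) meas assms(4)]])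
  have "is_minimizer (\<lambda>_. abs) M X D u (opt_alloc (\<lambda>_. abs) M X D u)"
    using assms(6) unfolding H1_def opt_alloc_def by (rule theI')
  then have "is_minimizer (\<lambda>_. abs) M (agg_risks X CR) (agg_index D CR) u
               (agg_alloc D CR (opt_alloc (\<lambda>_. abs) M X D u))"
    using assms(3,10) by (intro is_minimizer_agg_alloc)
  then show ?thesis
    using assms(8) unfolding H1_def opt_alloc_def agg_alloc_def by (rule the1_equality[rotated])
qed

end
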